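(* Let $X_1,\dots,X_n$ be independent random variables, with $X_i$ taking values in a set $\mathcal{B}_i$. For each $i$ let $\mathcal{A}_i\subseteq\mathcal{B}_i$ be measurable, and let $\mathcal{A}=\prod_{i=1}^n\mathcal{A}_i$, identified with the event $\{X_i\in\mathcal{A}_i \text{ for all } i\}$; assume $\Pr[\mathcal{A}]>0$. Let $f:\prod_{i=1}^n\mathcal{B}_i\to\mathbb{R}$ be a non-negative measurable function such that $|f(x)-f(x')|\le d_i$ whenever $x,x'\in\mathcal{A}$ differ only in the $i$-th coordinate, and let $Y=f(X_1,\dots,X_n)$ have finite expectation. Then for every $t>0$, \[ \Pr\left[Y>\frac{\mathbb{E}[Y]}{\Pr[\mathcal{A}]}+t\right]\le e^{-2t^2/\sum_{i=1}^n d_i^2}+\Pr[\bar{\mathcal{A}}], \] where $\bar{\mathcal{A}}$ is the complement of $\mathcal{A}$. *)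

theory Defs
  imports "HOL-Probability.Probability"
begin

end

theory Submission
  imports Defs
begin

(*
  Conditioning a product probability measure on a product event A = A_1 x ... x A_n yields
  again a product measure, whose factors are the marginals conditioned on the A_i.  Composing f
  with the coordinatewise retraction onto A (coordinates outside A_i are replaced by those of a
  fixed point of A) extends f from A to a function with the bounded differences d_i everywhere,
  so McDiarmid's inequality applies to it under the conditioned measure.  McDiarmid's inequality
  is proved in the usual way: integrating out one coordinate at a time, Hoeffding's lemma costs
  a factor exp (s^2 d_i^2 / 8) in the moment generating function.  As f >= 0, the conditional
  mean is at most E[Y] / Pr[A]; the event {Y > E[Y] / Pr[A] + t} is then covered by its part
  inside A, bounded by the conditional tail, and by the complement of A.
*)

lemma bounded_differences_sum_le:
  fixes f :: "('i \<Rightarrow> 'b) \<Rightarrow> real"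
  assumes diff: "\<And>i x x'. i \<in> I \<Longrightarrow> x \<in> PiE I A \<Longrightarrow> x' \<in> PiE I A \<Longrightarrow>
      (\<forall>j\<in>I. j \<noteq> i \<longrightarrow> x j = x' j) \<Longrightarrow> \<bar>f x - f x'\<bar> \<le> d i"
  shows "finite J \<Longrightarrow> J \<subseteq> I \<Longrightarrow> x \<in> PiE I A \<Longrightarrow> x' \<in> PiE I A \<Longrightarrow>
      (\<forall>j\<in>I - J. x j = x' j) \<Longrightarrow> \<bar>f x - f x'\<bar> \<le> (\<Sum>j\<in>J. d j)"
proof (induction J arbitrary: x' rule: finite_induct)
  case empty
  then have "x = x'" by (intro PiE_ext[of x I A x']) auto
  then show ?case by simp
next
  case (insert j J x')
  define w where "w = x'(j := x j)"
  have j: "j \<in> I" using insert.prems by auto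
  have w: "w \<in> PiE I A" using insert.prems j unfolding w_def by (auto simp: PiE_iff extensional_def)
  have "\<bar>f x - f w\<bar> \<le> (\<Sum>j\<in>J. d j)"
    by (rule insert.IH) (use insert.prems w in \<open>auto simp: w_def\<close>)
  moreover have "\<bar>f w - f x'\<bar> \<le> d j"
    by (rule diff[OF j w insert.prems(3)]) (auto simp: w_def)
  ultimately show ?case using insert.hyps by simp
qed

lemma bounded_differences_imp_bounded:
  fixes f :: "('i \<Rightarrow> 'b) \<Rightarrow> real"
  assumes "finite I" and "PiE I A \<noteq> {}"
    and diff: "\<And>i x x'. i \<in> I \<Longrightarrow> x \<in> PiE I A \<Longrightarrow> x' \<in> PiE I A \<Longrightarrow>
      (\<forall>j\<in>I. j \<noteq> i \<longrightarrow> x j = x' j) \<Longrightarrow> \<bar>f x - f x'\<bar> \<le> d i"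
  obtains K where "\<And>x. x \<in> PiE I A \<Longrightarrow> \<bar>f x\<bar> \<le> K"
proof -
  obtain z where z: "z \<in> PiE I A" using \<open>PiE I A \<noteq> {}\<close> by blast
  have "\<bar>f x\<bar> \<le> \<bar>f z\<bar> + (\<Sum>i\<in>I. d i)" if "x \<in> PiE I A" for x
  proof -
    have "\<bar>f x - f z\<bar> \<le> (\<Sum>i\<in>I. d i)"
      by (rule bounded_differences_sum_le[OF diff]) (use \<open>finite I\<close> that z in auto)
    then show ?thesis by arith
  qed
  then show ?thesis by (rule that)
qed

lemma bounded_differences_extension:
  fixes f :: "('i \<Rightarrow> 'a) \<Rightarrow> real"
  assumes A: "\<And>i. i \<in> I \<Longrightarrow> A i \<in> sets (M i)" and "PiE I A \<noteq> {}"
    and f: "f \<in> borel_measurable (PiM I M)"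
    and diff: "\<And>i x x'. i \<in> I \<Longrightarrow> x \<in> PiE I A \<Longrightarrow> x' \<in> PiE I A \<Longrightarrow>
      (\<forall>j\<in>I. j \<noteq> i \<longrightarrow> x j = x' j) \<Longrightarrow> \<bar>f x - f x'\<bar> \<le> d i"
  obtains g where "g \<in> borel_measurable (PiM I M)" and "\<And>x. x \<in> PiE I A \<Longrightarrow> g x = f x"
    and "\<And>i x x'. i \<in> I \<Longrightarrow> (\<forall>j\<in>I. j \<noteq> i \<longrightarrow> x j = x' j) \<Longrightarrow> \<bar>g x - g x'\<bar> \<le> d i"
proof -
  obtain z where z: "z \<in> PiE I A" using \<open>PiE I A \<noteq> {}\<close> by blast
  define r where "r x = (\<lambda>i\<in>I. if x i \<in> A i then x i else z i)" for x
  have r_in: "r x \<in> PiE I A" for x using z by (auto simp: r_def)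
  have r: "r \<in> measurable (PiM I M) (PiM I M)"
    unfolding r_def
  proof (rule measurable_restrict)
    fix i assume i: "i \<in> I"
    note [measurable] = A[OF i]
    have "z i \<in> space (M i)" using z i sets.sets_into_space[OF A[OF i]] by auto
    then show "(\<lambda>x. if x i \<in> A i then x i else z i) \<in> measurable (PiM I M) (M i)"
      using i by measurable
  qed
  show ?thesis
  proof
    show "(\<lambda>x. f (r x)) \<in> borel_measurable (PiM I M)" using measurable_compose[OF r f] .
    show "f (r x) = f x" if "x \<in> PiE I A" for x
      using that by (auto simp: r_def PiE_iff extensional_def intro!: arg_cong[where f=f])
    show "\<bar>f (r x) - f (r x')\<bar> \<le> d i" if "i \<in> I" "\<forall>j\<in>I. j \<noteq> i \<longrightarrow> x j = x' j" for i x x'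
      using that r_in by (intro diff) (auto simp: r_def)
  qed
qed

lemma ennreal_prod_divide:
  fixes a b :: "'i \<Rightarrow> ennreal"
  assumes "finite I" and "\<And>i. i \<in> I \<Longrightarrow> b i < top"
  shows "(\<Prod>i\<in>I. a i) / (\<Prod>i\<in>I. b i) = (\<Prod>i\<in>I. a i / b i)"
proof -
  have "inverse (\<Prod>i\<in>I. b i) = (\<Prod>i\<in>I. inverse (b i))"
    using assms
  proof (induction I rule: finite_induct)
    case (insert j J)
    then have "(\<Prod>i\<in>J. b i) < top" by (auto simp: ennreal_prod_eq_top less_top[symmetric])
    with insert show ?case by (simp add: ennreal_inverse_mult)
  qed simp
  then show ?thesis by (simp add: divide_ennreal_def prod.distrib)
qed

lemma (in prob_space) Hoeffdings_lemma_bounded_oscillation: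
  fixes f :: "'a \<Rightarrow> real"
  assumes "s > 0" and [measurable]: "f \<in> borel_measurable M"
    and osc: "\<And>x y. x \<in> space M \<Longrightarrow> y \<in> space M \<Longrightarrow> \<bar>f x - f y\<bar> \<le> \<delta>"
  shows "(\<integral>\<^sup>+x. ennreal (exp (s * (f x - c))) \<partial>M)
    \<le> ennreal (exp (s * (expectation f - c))) * ennreal (exp (s\<^sup>2 * \<delta>\<^sup>2 / 8))"
proof -
  define lo where "lo = Inf (f ` space M)"
  obtain x\<^sub>0 where x\<^sub>0: "x\<^sub>0 \<in> space M" using not_empty by blast
  have "f x\<^sub>0 - \<delta> \<le> f x" if "x \<in> space M" for x
    using osc[OF x\<^sub>0 that] by simp
  then have bdd: "bdd_below (f ` space M)" by (intro bdd_belowI2)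
  have "lo \<le> f x \<and> f x \<le> lo + \<delta>" if x: "x \<in> space M" for x
  proof
    show "lo \<le> f x" unfolding lo_def using x bdd by (simp add: cInf_lower)
    have "f x - \<delta> \<le> lo" unfolding lo_def
      using x osc not_empty by (intro cINF_greatest) (force simp: abs_le_iff)+
    then show "f x \<le> lo + \<delta>" by simp
  qed
  then interpret interval_bounded_random_variable M f lo "lo + \<delta>"
    by unfold_locales (auto intro!: AE_I2)
  have "(\<integral>\<^sup>+x. ennreal (exp (s * (f x - c))) \<partial>M)
      = (\<integral>\<^sup>+x. ennreal (exp (s * (expectation f - c))) * ennreal (exp (s * (f x - expectation f))) \<partial>M)"
    by (rule nn_integral_cong) (simp add: ennreal_mult'[symmetric] exp_add[symmetric] algebra_simps)
  also have "\<dots> = ennreal (exp (s * (expectation f - c))) * (\<integral>\<^sup>+x. ennreal (exp (s * (f x - expectation f))) \<partial>M)"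
    by (rule nn_integral_cmult) measurable
  also have "\<dots> \<le> ennreal (exp (s * (expectation f - c))) * ennreal (exp (s\<^sup>2 * \<delta>\<^sup>2 / 8))"
    using Hoeffdings_lemma_nn_integral[OF \<open>s > 0\<close>] by (intro mult_left_mono) simp_all
  finally show ?thesis .
qed

lemma (in prob_space) integral_uniform_measure_le:
  fixes f :: "'a \<Rightarrow> real"
  assumes S: "S \<in> events" and "prob S > 0" and f: "integrable M f"
    and nonneg: "\<And>x. x \<in> space M \<Longrightarrow> 0 \<le> f x"
  shows "(\<integral>x. f x \<partial>uniform_measure M S) \<le> expectation f / prob S"
proof -
  have [measurable]: "f \<in> borel_measurable M" using f by simp
  have "(\<integral>\<^sup>+x. ennreal (f x) \<partial>uniform_measure M S) = (\<integral>\<^sup>+x. ennreal (f x) * indicator S x \<partial>M) / emeasure M S"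
    using S by (intro nn_integral_uniform_measure) auto
  also have "\<dots> \<le> (\<integral>\<^sup>+x. ennreal (f x) \<partial>M) / emeasure M S"
    by (intro divide_right_mono_ennreal nn_integral_mono) (simp add: indicator_def)
  also have "(\<integral>\<^sup>+x. ennreal (f x) \<partial>M) = ennreal (expectation f)"
    using nonneg by (intro nn_integral_eq_integral f AE_I2) auto
  also have "ennreal (expectation f) / emeasure M S = ennreal (expectation f / prob S)"
    using \<open>prob S > 0\<close> nonneg
    by (simp add: emeasure_eq_measure divide_ennreal integral_nonneg_AE AE_I2)
  finally have le: "(\<integral>\<^sup>+x. ennreal (f x) \<partial>uniform_measure M S) \<le> ennreal (expectation f / prob S)" .
  have "(\<integral>x. f x \<partial>uniform_measure M S) = enn2real (\<integral>\<^sup>+x. ennreal (f x) \<partial>uniform_measure M S)"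
    using nonneg by (intro integral_eq_nn_integral AE_I2) auto
  also have "\<dots> \<le> expectation f / prob S"
    using le \<open>prob S > 0\<close> nonneg
    by (intro enn2real_leI) (auto intro!: divide_nonneg_pos integral_nonneg_AE AE_I2)
  finally show ?thesis .
qed

lemma (in prob_space) prob_le_uniform_measure_add_compl:
  assumes F: "F \<in> events" and S: "S \<in> events" and "prob S > 0"
  shows "prob F \<le> measure (uniform_measure M S) F + prob (space M - S)"
proof -
  have "prob F \<le> prob ((F \<inter> S) \<union> (space M - S))"
    using F S sets.sets_into_space[OF F] by (intro finite_measure_mono) auto
  also have "\<dots> \<le> prob (F \<inter> S) + prob (space M - S)"
    using F S by (intro measure_Un_le) auto
  also have "prob (F \<inter> S) = prob S * measure (uniform_measure M S) F"
    using F S \<open>prob S > 0\<close> by (simp add: emeasure_eq_measure Int_commute)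
  also have "\<dots> \<le> measure (uniform_measure M S) F"
    by (intro mult_left_le_one_le) auto
  finally show ?thesis by simp
qed

context product_prob_space
begin

lemma partial_integral_bounded_differences:
  fixes g :: "('i \<Rightarrow> 'a) \<Rightarrow> real"
  assumes g: "g \<in> borel_measurable (PiM (insert i J) M)" "i \<notin> J"
    and bounded: "\<And>x. x \<in> space (PiM (insert i J) M) \<Longrightarrow> \<bar>g x\<bar> \<le> K"
    and diff: "\<And>j x x'. j \<in> insert i J \<Longrightarrow> x \<in> space (PiM (insert i J) M) \<Longrightarrow>
      x' \<in> space (PiM (insert i J) M) \<Longrightarrow> (\<forall>k\<in>insert i J. k \<noteq> j \<longrightarrow> x k = x' k) \<Longrightarrow>
      \<bar>g x - g x'\<bar> \<le> d j"
    and j: "j \<in> J" and x: "x \<in> space (PiM J M)" and x': "x' \<in> space (PiM J M)"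
    and agree: "\<forall>k\<in>J. k \<noteq> j \<longrightarrow> x k = x' k"
  shows "\<bar>(\<integral>y. g (x(i := y)) \<partial>M i) - (\<integral>y. g (x'(i := y)) \<partial>M i)\<bar> \<le> d j"
proof -
  have upd: "z(i := y) \<in> space (PiM (insert i J) M)" if "z \<in> space (PiM J M)" "y \<in> space (M i)" for z y
    using measurable_space[OF measurable_component_update[OF that(1) g(2)] that(2)] .
  have int: "integrable (M i) (\<lambda>y. g (z(i := y)))" if "z \<in> space (PiM J M)" for z
  proof (rule M.integrable_const_bound[where B=K])
    show "(\<lambda>y. g (z(i := y))) \<in> borel_measurable (M i)"
      using measurable_compose[OF measurable_component_update[OF that g(2)] g(1)] .
  qed (use bounded[OF upd[OF that]] in auto)
  have "\<bar>(\<integral>y. g (x(i := y)) \<partial>M i) - (\<integral>y. g (x'(i := y)) \<partial>M i)\<bar>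
      = \<bar>\<integral>y. g (x(i := y)) - g (x'(i := y)) \<partial>M i\<bar>"
    using int[OF x] int[OF x'] by simp
  also have "\<dots> \<le> (\<integral>y. \<bar>g (x(i := y)) - g (x'(i := y))\<bar> \<partial>M i)"
    by (rule integral_abs_bound)
  also have "\<dots> \<le> d j"
  proof (intro M.integral_le_const AE_I2)
    show "integrable (M i) (\<lambda>y. \<bar>g (x(i := y)) - g (x'(i := y))\<bar>)"
      using int[OF x] int[OF x'] by auto
    show "\<bar>g (x(i := y)) - g (x'(i := y))\<bar> \<le> d j" if "y \<in> space (M i)" for y
      using j agree by (intro diff upd x x' that) auto
  qed
  finally show ?thesis .
qed

lemma borel_measurable_partial_integral:
  fixes g :: "('i \<Rightarrow> 'a) \<Rightarrow> real"
  assumes "g \<in> borel_measurable (PiM (insert i J) M)"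
  shows "(\<lambda>x. \<integral>y. g (x(i := y)) \<partial>M i) \<in> borel_measurable (PiM J M)"
proof -
  have "(\<lambda>(x, y). g (x(i := y))) \<in> borel_measurable (PiM J M \<Otimes>\<^sub>M M i)"
    using measurable_compose[OF measurable_add_dim assms] by (simp add: case_prod_beta')
  then show ?thesis by (rule M.borel_measurable_lebesgue_integral)
qed

lemma nn_integral_exp_partial_integral_le:
  fixes g :: "('i \<Rightarrow> 'a) \<Rightarrow> real"
  assumes "finite J" and "i \<notin> J" and "s > 0"
    and g[measurable]: "g \<in> borel_measurable (PiM (insert i J) M)"
    and bounded: "\<And>x. x \<in> space (PiM (insert i J) M) \<Longrightarrow> \<bar>g x\<bar> \<le> K"
    and osc: "\<And>x y y'. x \<in> space (PiM J M) \<Longrightarrow> y \<in> space (M i) \<Longrightarrow> y' \<in> space (M i) \<Longrightarrow>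
      \<bar>g (x(i := y)) - g (x(i := y'))\<bar> \<le> \<delta>"
  shows "(\<integral>\<^sup>+z. ennreal (exp (s * (g z - (\<integral>z. g z \<partial>PiM (insert i J) M)))) \<partial>PiM (insert i J) M)
    \<le> (\<integral>\<^sup>+x. ennreal (exp (s * ((\<integral>y. g (x(i := y)) \<partial>M i)
          - (\<integral>x. (\<integral>y. g (x(i := y)) \<partial>M i) \<partial>PiM J M)))) \<partial>PiM J M)
      * ennreal (exp (s\<^sup>2 * \<delta>\<^sup>2 / 8))"
proof -
  interpret PiJ: prob_space "PiM (insert i J) M" by (rule prob_space_PiM) (rule M.prob_space_axioms)
  define c where "c = (\<integral>z. g z \<partial>PiM (insert i J) M)"
  define h where "h x = (\<integral>y. g (x(i := y)) \<partial>M i)" for x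
  have [measurable]: "h \<in> borel_measurable (PiM J M)"
    unfolding h_def using g by (rule borel_measurable_partial_integral)
  have "integrable (PiM (insert i J) M) g"
    using bounded by (intro PiJ.integrable_const_bound[where B=K] AE_I2) auto
  then have c_eq: "c = (\<integral>x. h x \<partial>PiM J M)"
    unfolding c_def h_def using assms(1,2) by (intro product_integral_insert) auto
  have Hoeffding: "(\<integral>\<^sup>+y. ennreal (exp (s * (g (x(i := y)) - c))) \<partial>M i)
      \<le> ennreal (exp (s * (h x - c))) * ennreal (exp (s\<^sup>2 * \<delta>\<^sup>2 / 8))"
    if x: "x \<in> space (PiM J M)" for x
    unfolding h_def
  proof (rule M.Hoeffdings_lemma_bounded_oscillation[OF \<open>s > 0\<close> _ osc[OF x]])
    show "(\<lambda>y. g (x(i := y))) \<in> borel_measurable (M i)"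
      using measurable_compose[OF measurable_component_update[OF x \<open>i \<notin> J\<close>] g] .
  qed
  have "(\<integral>\<^sup>+z. ennreal (exp (s * (g z - c))) \<partial>PiM (insert i J) M)
      = (\<integral>\<^sup>+x. (\<integral>\<^sup>+y. ennreal (exp (s * (g (x(i := y)) - c))) \<partial>M i) \<partial>PiM J M)"
    using assms(1,2) by (intro product_nn_integral_insert) auto
  also have "\<dots> \<le> (\<integral>\<^sup>+x. ennreal (exp (s * (h x - c))) * ennreal (exp (s\<^sup>2 * \<delta>\<^sup>2 / 8)) \<partial>PiM J M)"
    by (intro nn_integral_mono Hoeffding)
  also have "\<dots> = (\<integral>\<^sup>+x. ennreal (exp (s * (h x - c))) \<partial>PiM J M) * ennreal (exp (s\<^sup>2 * \<delta>\<^sup>2 / 8))"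
    by (intro nn_integral_multc) simp
  also have "\<dots> = (\<integral>\<^sup>+x. ennreal (exp (s * (h x - (\<integral>x. h x \<partial>PiM J M)))) \<partial>PiM J M)
      * ennreal (exp (s\<^sup>2 * \<delta>\<^sup>2 / 8))"
    by (simp only: c_eq)
  finally show ?thesis unfolding c_def h_def .
qed

lemma McDiarmid_mgf:
  fixes g :: "('i \<Rightarrow> 'a) \<Rightarrow> real"
  assumes "finite J" and "s > 0" and "g \<in> borel_measurable (PiM J M)"
    and "\<And>j x x'. j \<in> J \<Longrightarrow> x \<in> space (PiM J M) \<Longrightarrow> x' \<in> space (PiM J M) \<Longrightarrow>
      (\<forall>k\<in>J. k \<noteq> j \<longrightarrow> x k = x' k) \<Longrightarrow> \<bar>g x - g x'\<bar> \<le> d j"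
  shows "(\<integral>\<^sup>+x. ennreal (exp (s * (g x - (\<integral>z. g z \<partial>PiM J M)))) \<partial>PiM J M)
    \<le> ennreal (exp (s\<^sup>2 * (\<Sum>j\<in>J. (d j)\<^sup>2) / 8))"
  using assms(1,3,4)
proof (induction J arbitrary: g rule: finite_induct)
  case empty
  interpret P0: prob_space "PiM {} M" by (rule prob_space_PiM) (rule M.prob_space_axioms)
  have space: "space (PiM {} M) = {\<lambda>_. undefined}" by (simp add: space_PiM)
  have "(\<integral>z. g z \<partial>PiM {} M) = (\<integral>z. g (\<lambda>_. undefined) \<partial>PiM {} M)"
    by (rule Bochner_Integration.integral_cong) (auto simp: space)
  then have "(\<integral>z. g z \<partial>PiM {} M) = g (\<lambda>_. undefined)" by (simp add: P0.prob_space)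
  then have "(\<integral>\<^sup>+x. ennreal (exp (s * (g x - (\<integral>z. g z \<partial>PiM {} M)))) \<partial>PiM {} M) = (\<integral>\<^sup>+x. 1 \<partial>PiM {} M)"
    by (intro nn_integral_cong) (auto simp: space)
  then show ?case by (simp add: P0.emeasure_space_1)
next
  case (insert i J g)
  interpret PiJ: prob_space "PiM (insert i J) M" by (rule prob_space_PiM) (rule M.prob_space_axioms)
  note g = insert.prems(1) and diff = insert.prems(2)
  have ne: "PiE (insert i J) (\<lambda>j. space (M j)) \<noteq> {}" using PiJ.not_empty by (simp add: space_PiM)
  obtain K where bounded: "\<And>x. x \<in> space (PiM (insert i J) M) \<Longrightarrow> \<bar>g x\<bar> \<le> K"
    by (rule bounded_differences_imp_bounded[OF _ ne, where f=g and d=d])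
      (use insert.hyps diff in \<open>auto simp: space_PiM\<close>)
  define h where "h x = (\<integral>y. g (x(i := y)) \<partial>M i)" for x
  have IH: "(\<integral>\<^sup>+x. ennreal (exp (s * (h x - (\<integral>z. h z \<partial>PiM J M)))) \<partial>PiM J M)
      \<le> ennreal (exp (s\<^sup>2 * (\<Sum>j\<in>J. (d j)\<^sup>2) / 8))"
  proof (rule insert.IH)
    show "h \<in> borel_measurable (PiM J M)"
      unfolding h_def using g by (rule borel_measurable_partial_integral)
    show "\<bar>h x - h x'\<bar> \<le> d j"
      if "j \<in> J" "x \<in> space (PiM J M)" "x' \<in> space (PiM J M)" "\<forall>k\<in>J. k \<noteq> j \<longrightarrow> x k = x' k" for j x x'
      unfolding h_def using g insert.hyps(2) bounded diff that by (rule partial_integral_bounded_differences)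
  qed
  have "(\<integral>\<^sup>+x. ennreal (exp (s * (g x - (\<integral>z. g z \<partial>PiM (insert i J) M)))) \<partial>PiM (insert i J) M)
      \<le> (\<integral>\<^sup>+x. ennreal (exp (s * (h x - (\<integral>z. h z \<partial>PiM J M)))) \<partial>PiM J M)
        * ennreal (exp (s\<^sup>2 * (d i)\<^sup>2 / 8))"
    unfolding h_def using insert.hyps \<open>s > 0\<close> g bounded
  proof (rule nn_integral_exp_partial_integral_le)
    fix x y y' assume "x \<in> space (PiM J M)" "y \<in> space (M i)" "y' \<in> space (M i)"
    then show "\<bar>g (x(i := y)) - g (x(i := y'))\<bar> \<le> d i"
      by (intro diff) (auto simp: space_PiM PiE_iff extensional_def)
  qed
  also have "\<dots> \<le> ennreal (exp (s\<^sup>2 * (\<Sum>j\<in>J. (d j)\<^sup>2) / 8)) * ennreal (exp (s\<^sup>2 * (d i)\<^sup>2 / 8))"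
    using IH by (intro mult_right_mono) simp_all
  also have "\<dots> = ennreal (exp (s\<^sup>2 * (\<Sum>j\<in>insert i J. (d j)\<^sup>2) / 8))"
    using insert.hyps by (simp add: ennreal_mult'[symmetric] exp_add[symmetric] add_divide_distrib distrib_left)
  finally show ?case .
qed

lemma McDiarmid_ineq_ge:
  fixes g :: "('i \<Rightarrow> 'a) \<Rightarrow> real"
  assumes "finite I" and "t > 0" and [measurable]: "g \<in> borel_measurable (PiM I M)"
    and diff: "\<And>i x x'. i \<in> I \<Longrightarrow> x \<in> space (PiM I M) \<Longrightarrow> x' \<in> space (PiM I M) \<Longrightarrow>
      (\<forall>j\<in>I. j \<noteq> i \<longrightarrow> x j = x' j) \<Longrightarrow> \<bar>g x - g x'\<bar> \<le> d i"
  shows "measure (PiM I M) {x \<in> space (PiM I M). g x \<ge> (\<integral>z. g z \<partial>PiM I M) + t}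
    \<le> exp (- 2 * t\<^sup>2 / (\<Sum>i\<in>I. (d i)\<^sup>2))"
proof -
  define D where "D = (\<Sum>i\<in>I. (d i)\<^sup>2)"
  define c where "c = (\<integral>z. g z \<partial>PiM I M)"
  consider "D = 0" | "D > 0" unfolding D_def by (metis sum_nonneg zero_le_power2 order_le_less)
  then show ?thesis
  proof cases
    case 1
    then show ?thesis by (simp add: D_def[symmetric])
  next
    case 2
    define s where "s = 4 * t / D"
    have "s > 0" unfolding s_def using \<open>D > 0\<close> \<open>t > 0\<close> by simp
    have "emeasure (PiM I M) {x \<in> space (PiM I M). g x - c \<ge> t}
        \<le> ennreal (exp (- s * t)) * (\<integral>\<^sup>+x\<in>space (PiM I M). exp (s * (g x - c)) \<partial>PiM I M)"
      using \<open>s > 0\<close> by (intro Chernoff_ineq_nn_integral_ge) auto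
    also have "(\<integral>\<^sup>+x\<in>space (PiM I M). exp (s * (g x - c)) \<partial>PiM I M)
        = (\<integral>\<^sup>+x. exp (s * (g x - c)) \<partial>PiM I M)"
      by (intro nn_integral_cong) auto
    also have "ennreal (exp (- s * t)) * \<dots> \<le> ennreal (exp (- s * t)) * ennreal (exp (s\<^sup>2 * D / 8))"
      unfolding c_def D_def using \<open>s > 0\<close> diff
      by (intro mult_left_mono McDiarmid_mgf \<open>finite I\<close>) auto
    also have "\<dots> = ennreal (exp (- 2 * t\<^sup>2 / D))"
    proof -
      have "- s * t + s\<^sup>2 * D / 8 = - 2 * t\<^sup>2 / D"
        unfolding s_def using \<open>D > 0\<close> by (simp add: field_simps power2_eq_square)
      then show ?thesis by (simp add: ennreal_mult'[symmetric] exp_add[symmetric])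
    qed
    finally show ?thesis
      by (simp add: P.emeasure_eq_measure c_def D_def algebra_simps)
  qed
qed

lemma product_prob_space_uniform_measure:
  assumes "\<And>i. i \<in> I \<Longrightarrow> emeasure (M i) (A i) \<noteq> 0"
  shows "product_prob_space (\<lambda>i. if i \<in> I then uniform_measure (M i) (A i) else M i)"
proof -
  have "prob_space (if i \<in> I then uniform_measure (M i) (A i) else M i)" for i
    using assms by (auto simp: M.emeasure_finite intro!: prob_space_uniform_measure M.prob_space_axioms)
  then show ?thesis
    by (simp add: product_prob_space_def product_prob_space_axioms_def product_sigma_finite_def
        prob_space_imp_sigma_finite)
qed

lemma uniform_measure_PiM:
  assumes "finite I" and A: "\<And>i. i \<in> I \<Longrightarrow> A i \<in> sets (M i)"
    and pos: "\<And>i. i \<in> I \<Longrightarrow> emeasure (M i) (A i) \<noteq> 0"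
  shows "uniform_measure (PiM I M) (PiE I A) = PiM I (\<lambda>i. uniform_measure (M i) (A i))"
proof -
  define N where "N i = (if i \<in> I then uniform_measure (M i) (A i) else M i)" for i
  interpret N: product_prob_space N I
    unfolding N_def using pos by (rule product_prob_space_uniform_measure)
  have "uniform_measure (PiM I M) (PiE I A) = PiM I N"
  proof (rule N.PiM_eqI[OF \<open>finite I\<close>])
    show "sets (uniform_measure (PiM I M) (PiE I A)) = sets (PiM I N)"
      unfolding sets_uniform_measure by (intro sets_PiM_cong) (auto simp: N_def)
  next
    fix C assume C: "\<And>i. i \<in> I \<Longrightarrow> C i \<in> sets (N i)"
    then have C': "C i \<in> sets (M i)" if "i \<in> I" for i using that by (simp add: N_def)
    have "emeasure (uniform_measure (PiM I M) (PiE I A)) (PiE I C)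
        = emeasure (PiM I M) (PiE I (\<lambda>i. A i \<inter> C i)) / emeasure (PiM I M) (PiE I A)"
      using A C' \<open>finite I\<close> by (simp add: sets_PiM_I_finite PiE_Int)
    also have "\<dots> = (\<Prod>i\<in>I. emeasure (M i) (A i \<inter> C i)) / (\<Prod>i\<in>I. emeasure (M i) (A i))"
      using A C' \<open>finite I\<close> by (simp add: emeasure_PiM)
    also have "\<dots> = (\<Prod>i\<in>I. emeasure (M i) (A i \<inter> C i) / emeasure (M i) (A i))"
      using \<open>finite I\<close> by (intro ennreal_prod_divide) (auto simp: M.emeasure_eq_measure)
    also have "\<dots> = (\<Prod>i\<in>I. emeasure (N i) (C i))"
      using A C' by (intro prod.cong) (auto simp: N_def)
    finally show "emeasure (uniform_measure (PiM I M) (PiE I A)) (PiE I C) = (\<Prod>i\<in>I. emeasure (N i) (C i))" .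
  qed
  also have "PiM I N = PiM I (\<lambda>i. uniform_measure (M i) (A i))"
    by (intro PiM_cong) (auto simp: N_def)
  finally show ?thesis .
qed

lemma McDiarmid_ineq_uniform_measure:
  fixes g :: "('i \<Rightarrow> 'a) \<Rightarrow> real"
  assumes "finite I" and "t > 0" and A: "\<And>i. i \<in> I \<Longrightarrow> A i \<in> sets (M i)"
    and pos: "\<And>i. i \<in> I \<Longrightarrow> emeasure (M i) (A i) \<noteq> 0"
    and g: "g \<in> borel_measurable (PiM I M)"
    and diff: "\<And>i x x'. i \<in> I \<Longrightarrow> (\<forall>j\<in>I. j \<noteq> i \<longrightarrow> x j = x' j) \<Longrightarrow> \<bar>g x - g x'\<bar> \<le> d i"
  defines "Q \<equiv> uniform_measure (PiM I M) (PiE I A)"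
  shows "measure Q {x \<in> space Q. g x \<ge> (\<integral>x. g x \<partial>Q) + t} \<le> exp (- 2 * t\<^sup>2 / (\<Sum>i\<in>I. (d i)\<^sup>2))"
proof -
  define N where "N i = (if i \<in> I then uniform_measure (M i) (A i) else M i)" for i
  interpret N: product_prob_space N I
    unfolding N_def using pos by (rule product_prob_space_uniform_measure)
  have "Q = PiM I (\<lambda>i. uniform_measure (M i) (A i))"
    unfolding Q_def using \<open>finite I\<close> A pos by (rule uniform_measure_PiM)
  also have "\<dots> = PiM I N" by (intro PiM_cong) (auto simp: N_def)
  finally have Q_eq: "Q = PiM I N" .
  have sets_N: "sets (PiM I N) = sets (PiM I M)" unfolding Q_eq[symmetric] Q_def by simp
  have "g \<in> borel_measurable (PiM I N)" unfolding measurable_cong_sets[OF sets_N refl] by (fact g)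
  then show ?thesis
    unfolding Q_eq using \<open>finite I\<close> \<open>t > 0\<close> diff by (intro N.McDiarmid_ineq_ge) auto
qed

lemma McDiarmid_ineq_conditional:
  fixes f :: "('i \<Rightarrow> 'a) \<Rightarrow> real"
  assumes "finite I" and "t > 0"
    and A: "\<And>i. i \<in> I \<Longrightarrow> A i \<in> sets (M i)" and pos: "measure (PiM I M) (PiE I A) > 0"
    and f: "f \<in> borel_measurable (PiM I M)" "integrable (PiM I M) f"
    and nonneg: "\<And>x. x \<in> space (PiM I M) \<Longrightarrow> 0 \<le> f x"
    and diff: "\<And>i x x'. i \<in> I \<Longrightarrow> x \<in> PiE I A \<Longrightarrow> x' \<in> PiE I A \<Longrightarrow>
      (\<forall>j\<in>I. j \<noteq> i \<longrightarrow> x j = x' j) \<Longrightarrow> \<bar>f x - f x'\<bar> \<le> d i"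
  shows "measure (PiM I M) {x \<in> space (PiM I M).
      f x > (\<integral>x. f x \<partial>PiM I M) / measure (PiM I M) (PiE I A) + t}
    \<le> exp (- 2 * t\<^sup>2 / (\<Sum>i\<in>I. (d i)\<^sup>2)) + measure (PiM I M) (space (PiM I M) - PiE I A)"
proof -
  define S where "S = PiE I A"
  define Q where "Q = uniform_measure (PiM I M) S"
  have S[measurable]: "S \<in> sets (PiM I M)" unfolding S_def using \<open>finite I\<close> A by (rule sets_PiM_I_finite)
  have S_pos: "emeasure (PiM I M) S \<noteq> 0" using pos by (simp add: S_def P.emeasure_eq_measure)
  then have A_pos: "emeasure (M i) (A i) \<noteq> 0" if "i \<in> I" for i
    using A that \<open>finite I\<close> by (simp add: S_def emeasure_PiM)
  interpret Q: prob_space Q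
    unfolding Q_def using S_pos by (intro prob_space_uniform_measure) (simp_all add: P.emeasure_finite)
  have ne: "PiE I A \<noteq> {}" using pos by (metis measure_empty less_irrefl)
  obtain g where g[measurable]: "g \<in> borel_measurable (PiM I M)"
    and g_eq: "\<And>x. x \<in> PiE I A \<Longrightarrow> g x = f x"
    and g_diff: "\<And>i x x'. i \<in> I \<Longrightarrow> (\<forall>j\<in>I. j \<noteq> i \<longrightarrow> x j = x' j) \<Longrightarrow> \<bar>g x - g x'\<bar> \<le> d i"
    by (rule bounded_differences_extension[OF A ne f(1) diff]) auto
  have "(\<integral>x. g x \<partial>Q) = (\<integral>x. f x \<partial>Q)"
    unfolding Q_def using g_eq f(1) by (intro integral_cong_AE AE_uniform_measureI[OF S] AE_I2) (auto simp: S_def)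
  also have "\<dots> \<le> (\<integral>x. f x \<partial>PiM I M) / measure (PiM I M) S"
    unfolding Q_def using S pos f(2) nonneg by (intro P.integral_uniform_measure_le) (auto simp: S_def)
  finally have E_Q: "(\<integral>x. g x \<partial>Q) \<le> (\<integral>x. f x \<partial>PiM I M) / measure (PiM I M) S" .
  define F where "F = {x \<in> space (PiM I M). f x > (\<integral>x. f x \<partial>PiM I M) / measure (PiM I M) S + t}"
  have "measure (PiM I M) F \<le> measure Q F + measure (PiM I M) (space (PiM I M) - S)"
    unfolding Q_def using pos f(1) S by (intro P.prob_le_uniform_measure_add_compl) (auto simp: F_def S_def[symmetric])
  also have "measure Q F \<le> measure Q {x \<in> space Q. g x \<ge> (\<integral>x. g x \<partial>Q) + t}"
  proof (rule Q.finite_measure_mono_AE)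
    show "AE x in Q. x \<in> F \<longrightarrow> x \<in> {x \<in> space Q. g x \<ge> (\<integral>x. g x \<partial>Q) + t}"
      using E_Q g_eq by (intro AE_uniform_measureI[OF S, folded Q_def] AE_I2) (auto simp: Q_def F_def S_def)
    show "{x \<in> space Q. g x \<ge> (\<integral>x. g x \<partial>Q) + t} \<in> sets Q"
      unfolding Q_def by measurable
  qed
  also have "measure Q {x \<in> space Q. g x \<ge> (\<integral>x. g x \<partial>Q) + t} \<le> exp (- 2 * t\<^sup>2 / (\<Sum>i\<in>I. (d i)\<^sup>2))"
    unfolding Q_def S_def using \<open>finite I\<close> \<open>t > 0\<close> A A_pos g g_diff by (rule McDiarmid_ineq_uniform_measure)
  finally show ?thesis unfolding F_def S_def by simp
qed

end

lemma (in prob_space) indep_vars_distr_eq_PiM_product_prob_space: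
  assumes indep: "indep_vars N X I" and "I \<noteq> {}"
  obtains \<mu> where "product_prob_space \<mu>" and "\<And>i. i \<in> I \<Longrightarrow> \<mu> i = distr M (N i) (X i)"
    and "distr M (PiM I N) (\<lambda>\<omega>. \<lambda>i\<in>I. X i \<omega>) = PiM I \<mu>"
proof
  define \<mu> where "\<mu> i = (if i \<in> I then distr M (N i) (X i) else return (count_space UNIV) undefined)" for i
  have X: "X i \<in> measurable M (N i)" if "i \<in> I" for i
    using indep that unfolding indep_vars_def by blast
  have "prob_space (\<mu> i)" for i
    using X by (auto simp: \<mu>_def intro!: prob_space_distr prob_space_return)
  then show "product_prob_space \<mu>"
    by (simp add: product_prob_space_def product_prob_space_axioms_def product_sigma_finite_def
        prob_space_imp_sigma_finite)
  show "\<mu> i = distr M (N i) (X i)" if "i \<in> I" for i using that by (simp add: \<mu>_def)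
  have "distr M (PiM I N) (\<lambda>\<omega>. \<lambda>i\<in>I. X i \<omega>) = PiM I (\<lambda>i. distr M (N i) (X i))"
    using indep indep_vars_iff_distr_eq_PiM'[where M'=N and X=X, OF \<open>I \<noteq> {}\<close> X] by blast
  also have "\<dots> = PiM I \<mu>" by (intro PiM_cong) (auto simp: \<mu>_def)
  finally show "distr M (PiM I N) (\<lambda>\<omega>. \<lambda>i\<in>I. X i \<omega>) = PiM I \<mu>" .
qed

lemma (in prob_space) McDiarmid_ineq_conditional_distr:
  fixes Y :: "'a \<Rightarrow> 'i \<Rightarrow> 'b" and f :: "('i \<Rightarrow> 'b) \<Rightarrow> real"
  assumes "finite I" and "t > 0" and "product_prob_space \<mu>"
    and Y: "Y \<in> measurable M (PiM I \<mu>)" and law: "distr M (PiM I \<mu>) Y = PiM I \<mu>"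
    and A: "\<And>i. i \<in> I \<Longrightarrow> A i \<in> sets (\<mu> i)" and pos: "prob (Y -` PiE I A \<inter> space M) > 0"
    and f[measurable]: "f \<in> borel_measurable (PiM I \<mu>)" and int: "integrable M (\<lambda>\<omega>. f (Y \<omega>))"
    and nonneg: "\<And>x. x \<in> space (PiM I \<mu>) \<Longrightarrow> 0 \<le> f x"
    and diff: "\<And>i x x'. i \<in> I \<Longrightarrow> x \<in> PiE I A \<Longrightarrow> x' \<in> PiE I A \<Longrightarrow>
      (\<forall>j\<in>I. j \<noteq> i \<longrightarrow> x j = x' j) \<Longrightarrow> \<bar>f x - f x'\<bar> \<le> d i"
  shows "prob {\<omega> \<in> space M.
      f (Y \<omega>) > expectation (\<lambda>\<omega>. f (Y \<omega>)) / prob (Y -` PiE I A \<inter> space M) + t}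
    \<le> exp (- 2 * t\<^sup>2 / (\<Sum>i\<in>I. (d i)\<^sup>2)) + prob (space M - Y -` PiE I A \<inter> space M)"
proof -
  interpret \<mu>: product_prob_space \<mu> I by fact
  have S[measurable]: "PiE I A \<in> sets (PiM I \<mu>)" using \<open>finite I\<close> A by (rule sets_PiM_I_finite)
  have measure_Y: "prob (Y -` E \<inter> space M) = measure (PiM I \<mu>) E" if "E \<in> sets (PiM I \<mu>)" for E
    using measure_distr[OF Y that] law by simp
  have event: "{\<omega> \<in> space M. f (Y \<omega>) > r} = Y -` {x \<in> space (PiM I \<mu>). f x > r} \<inter> space M" for r
    using measurable_space[OF Y] by auto
  have "prob {\<omega> \<in> space M.
      f (Y \<omega>) > expectation (\<lambda>\<omega>. f (Y \<omega>)) / prob (Y -` PiE I A \<inter> space M) + t}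
    = measure (PiM I \<mu>) {x \<in> space (PiM I \<mu>).
      f x > (\<integral>x. f x \<partial>PiM I \<mu>) / measure (PiM I \<mu>) (PiE I A) + t}"
    unfolding event measure_Y[OF S] integral_distr[OF Y f, symmetric] law
    by (rule measure_Y) measurable
  also have "\<dots> \<le> exp (- 2 * t\<^sup>2 / (\<Sum>i\<in>I. (d i)\<^sup>2)) + measure (PiM I \<mu>) (space (PiM I \<mu>) - PiE I A)"
  proof (rule \<mu>.McDiarmid_ineq_conditional[OF \<open>finite I\<close> \<open>t > 0\<close> A _ f _ nonneg diff])
    show "measure (PiM I \<mu>) (PiE I A) > 0" using pos measure_Y[OF S] by simp
    show "integrable (PiM I \<mu>) f" using int integrable_distr_eq[OF Y f] law by simp
  qed
  also have "measure (PiM I \<mu>) (space (PiM I \<mu>) - PiE I A) = prob (space M - Y -` PiE I A \<inter> space M)"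
    using measurable_space[OF Y]
    by (subst measure_Y[symmetric]) (auto intro!: arg_cong[where f="measure M"])
  finally show ?thesis .
qed

lemma (in prob_space) McDiarmid_ineq_conditional_indep_vars:
  fixes X :: "'i \<Rightarrow> 'a \<Rightarrow> 'b" and f :: "('i \<Rightarrow> 'b) \<Rightarrow> real"
  assumes "finite I" and "t > 0" and indep: "indep_vars N X I"
    and A: "\<And>i. i \<in> I \<Longrightarrow> A i \<in> sets (N i)"
    and pos: "prob {\<omega> \<in> space M. \<forall>i\<in>I. X i \<omega> \<in> A i} > 0"
    and f: "f \<in> borel_measurable (PiM I N)" and nonneg: "\<And>x. x \<in> space (PiM I N) \<Longrightarrow> 0 \<le> f x"
    and diff: "\<And>i x x'. i \<in> I \<Longrightarrow> x \<in> PiE I A \<Longrightarrow> x' \<in> PiE I A \<Longrightarrow>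
      (\<forall>j\<in>I. j \<noteq> i \<longrightarrow> x j = x' j) \<Longrightarrow> \<bar>f x - f x'\<bar> \<le> d i"
    and int: "integrable M (\<lambda>\<omega>. f (\<lambda>i\<in>I. X i \<omega>))"
  shows "prob {\<omega> \<in> space M. f (\<lambda>i\<in>I. X i \<omega>) >
      expectation (\<lambda>\<omega>. f (\<lambda>i\<in>I. X i \<omega>)) / prob {\<omega> \<in> space M. \<forall>i\<in>I. X i \<omega> \<in> A i} + t}
    \<le> exp (- 2 * t\<^sup>2 / (\<Sum>i\<in>I. (d i)\<^sup>2)) + prob (space M - {\<omega> \<in> space M. \<forall>i\<in>I. X i \<omega> \<in> A i})"
proof (cases "I = {}")
  case True
  then show ?thesis by (simp add: add_increasing2)
next
  case False
  obtain \<mu> where "product_prob_space \<mu>" and \<mu>: "\<And>i. i \<in> I \<Longrightarrow> \<mu> i = distr M (N i) (X i)"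
    and law: "distr M (PiM I N) (\<lambda>\<omega>. \<lambda>i\<in>I. X i \<omega>) = PiM I \<mu>"
    using indep_vars_distr_eq_PiM_product_prob_space[OF indep False] by auto
  have sets_\<mu>: "sets (PiM I \<mu>) = sets (PiM I N)" by (intro sets_PiM_cong) (simp_all add: \<mu>)
  have Y: "(\<lambda>\<omega>. \<lambda>i\<in>I. X i \<omega>) \<in> measurable M (PiM I \<mu>)"
    unfolding measurable_cong_sets[OF refl sets_\<mu>]
    using indep unfolding indep_vars_def by (intro measurable_restrict) blast
  have B_eq: "{\<omega> \<in> space M. \<forall>i\<in>I. X i \<omega> \<in> A i} = (\<lambda>\<omega>. \<lambda>i\<in>I. X i \<omega>) -` PiE I A \<inter> space M"
    by (auto simp: PiE_iff)
  show ?thesis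
    unfolding B_eq
  proof (rule McDiarmid_ineq_conditional_distr[OF \<open>finite I\<close> \<open>t > 0\<close> \<open>product_prob_space \<mu>\<close> Y])
    show "distr M (PiM I \<mu>) (\<lambda>\<omega>. \<lambda>i\<in>I. X i \<omega>) = PiM I \<mu>"
      unfolding law[symmetric] by (rule distr_cong) (simp_all add: sets_\<mu>)
    show "A i \<in> sets (\<mu> i)" if "i \<in> I" for i using A[OF that] by (simp add: \<mu>[OF that])
    show "f \<in> borel_measurable (PiM I \<mu>)" using f by (simp add: measurable_cong_sets[OF sets_\<mu> refl])
    show "0 \<le> f x" if "x \<in> space (PiM I \<mu>)" for x
      using nonneg that sets_eq_imp_space_eq[OF sets_\<mu>] by simp
  qed (use pos int diff in \<open>simp_all only: B_eq\<close>)
qed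

theorem mainTheorem4:
  fixes M :: "'a measure" and N :: "nat \<Rightarrow> 'b measure" and X :: "nat \<Rightarrow> 'a \<Rightarrow> 'b"
    and n :: nat and A :: "nat \<Rightarrow> 'b set" and f :: "(nat \<Rightarrow> 'b) \<Rightarrow> real"
    and d :: "nat \<Rightarrow> real" and t :: real
  assumes "prob_space M"
    and "prob_space.indep_vars M N X {1..n}"
    and "\<And>i. i \<in> {1..n} \<Longrightarrow> A i \<in> sets (N i)"
    and "measure M {\<omega> \<in> space M. \<forall>i\<in>{1..n}. X i \<omega> \<in> A i} > 0"
    and "f \<in> borel_measurable (PiM {1..n} N)"
    and "\<And>x. x \<in> space (PiM {1..n} N) \<Longrightarrow> f x \<ge> 0"
    and "\<And>i x x'. i \<in> {1..n} \<Longrightarrow> x \<in> PiE {1..n} A \<Longrightarrow> x' \<in> PiE {1..n} A \<Longrightarrow>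
           (\<forall>j\<in>{1..n}. j \<noteq> i \<longrightarrow> x j = x' j) \<Longrightarrow> \<bar>f x - f x'\<bar> \<le> d i"
    and "integrable M (\<lambda>\<omega>. f (\<lambda>i\<in>{1..n}. X i \<omega>))"
    and "t > 0"
  shows "measure M {\<omega> \<in> space M. f (\<lambda>i\<in>{1..n}. X i \<omega>) >
            (\<integral>\<omega>. f (\<lambda>i\<in>{1..n}. X i \<omega>) \<partial>M)
              / measure M {\<omega> \<in> space M. \<forall>i\<in>{1..n}. X i \<omega> \<in> A i} + t}
         \<le> exp (- 2 * t\<^sup>2 / (\<Sum>i\<in>{1..n}. (d i)\<^sup>2))
            + measure M (space M - {\<omega> \<in> space M. \<forall>i\<in>{1..n}. X i \<omega> \<in> A i})"
proof -
  interpret prob_space M by fact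
  show ?thesis
    by (rule McDiarmid_ineq_conditional_indep_vars[OF finite_atLeastAtMost assms(9,2-8)])
qed

end
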